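(* Let $N$ be the generalised Cartan matrix of type $A_r$ ($r\ge1$) or $A^{(1)}_{r-1}$ ($r\ge2$), let $A=[A_{ij}]$ be a solution matrix of $N$, and let $\mathfrak h$, $\alpha_i$, $Z$, $\mathcal A$, $v_1,\dots,v_r$ be as in the context, with $F:\mathfrak h\to\mathrm{Der}(\mathcal A)$ a Lie algebra homomorphism satisfying $\ker F=Z$ and $F(H)(v_i)=\alpha_i(H)v_i$. Then there exist unique $\delta_1,\dots,\delta_r\in\mathrm{Im}\,F$ with $\alpha_i(\delta_j)=A_{ij}$ for all $i,j$; setting $\delta_{-i}=\frac{1}{A_{ii}}\bigl(-F(H_i)+\frac{1}{A_{ii}}\delta_i\bigr)$, the elements $\mathbf X_i=v_i\delta_i$, $\mathbf X_{-i}=v_i^{-1}\delta_{-i}$ satisfy $[\mathbf X_i,\mathbf X_{-i}]=F(H_i)$ and $[\mathbf X_i,\mathbf X_{-j}]=0$ for $i\ne j$; hence $F(H_a)$, $\mathbf X_{\pm i}$ satisfy all the defining relations (a)–(e) of $\hat{\mathfrak g}(N)$ (Problem 1 has a solution).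
   Context: The generalised Cartan matrix of type $A_r$ ($r\ge1$) is the $r\times r$ matrix $N=[n(i,j)]$ with $2$ on the diagonal, $-1$ in positions $(i,i\pm1)$ and $0$ elsewhere; that of type $A^{(1)}_1$ is $\begin{pmatrix}2&-2\\-2&2\end{pmatrix}$; that of type $A^{(1)}_{r-1}$ ($r\ge3$) has $2$ on the diagonal, $-1$ in positions $(i,i\pm1)$ and $(1,r),(r,1)$, $0$ elsewhere. A solution matrix of $N$ is an $r\times r$ complex matrix $A=[A_{ij}]$ with all $A_{ii}\ne0$ such that $A'=[A_{ij}/A_{jj}]$ satisfies: $A'_{ij}\in\{0,-1\}$ for $i\ne j$; $A'_{ij}+A'_{ji}=n(j,i)$; and if $A'_{ij}=-1$ then the $i$-th row and $j$-th column of $A'$ have no other entries $-1$. Let $s$ be the corank of $N$ ($s=0$ for $A_r$, $s=1$ for $A^{(1)}_{r-1}$), $\mathfrak h$ the complex vector space with basis $H_1,\dots,H_{r+s}$, $\alpha_1,\dots,\alpha_r\in\mathfrak h^*$ linearly independent with $\alpha_j(H_i)=n(i,j)$ ($1\le i,j\le r$), and $Z=\bigcap_i\ker\alpha_i$. Since $\ker F\subseteq Z$, each $\alpha_i$ induces a linear form on $\mathrm{Im}\,F$ via $\alpha_i(F(H))=\alpha_i(H)$. $\mathcal A$ is a complex commutative algebra, $\mathrm{Der}(\mathcal A)$ its Lie algebra of derivations; for $a\in\mathcal A$, $D\in\mathrm{Der}(\mathcal A)$, $aD$ is $b\mapsto aD(b)$; $v_1,\dots,v_r\in\mathcal A$ are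 invertible. The defining relations of $\hat{\mathfrak g}(N)$, for $\mathbf H_a=F(H_a)$: (a) $[\mathbf H_a,\mathbf H_b]=0$; (b) $[\mathbf X_i,\mathbf X_{-i}]=\mathbf H_i$, $[\mathbf X_i,\mathbf X_{-j}]=0$ ($i\ne j$); (c) $[\mathbf H_a,\mathbf X_{\pm j}]=\pm\alpha_j(H_a)\mathbf X_{\pm j}$; (d) $\mathrm{ad}(\mathbf X_i)^{1-n(i,j)}(\mathbf X_j)=0$ ($i\ne j$); (e) $\mathrm{ad}(\mathbf X_{-i})^{1-n(i,j)}(\mathbf X_{-j})=0$ ($i\ne j$). *)

theory Defs
  imports Complex_Main
begin

definition gcm_A :: "nat \<Rightarrow> nat \<Rightarrow> nat \<Rightarrow> int" where
  "gcm_A r i j = (if i = j then 2 else if i = j + 1 \<or> j = i + 1 then -1 else 0)"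

definition gcm_Aff :: "nat \<Rightarrow> nat \<Rightarrow> nat \<Rightarrow> int" where
  "gcm_Aff r i j =
    (if r = 2 then (if i = j then 2 else -2)
     else if i = j then 2
     else if i = j + 1 \<or> j = i + 1 \<or> (i = 1 \<and> j = r) \<or> (i = r \<and> j = 1) then -1
     else 0)"

definition normA :: "(nat \<Rightarrow> nat \<Rightarrow> complex) \<Rightarrow> nat \<Rightarrow> nat \<Rightarrow> complex" where
  "normA A i j = A i j / A j j"

definition solution_matrix ::
  "nat \<Rightarrow> (nat \<Rightarrow> nat \<Rightarrow> int) \<Rightarrow> (nat \<Rightarrow> nat \<Rightarrow> complex) \<Rightarrow> bool" where
  "solution_matrix r N A \<longleftrightarrow>
     (\<forall>i\<in>{1..r}. A i i \<noteq> 0) \<and>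
     (\<forall>i\<in>{1..r}. \<forall>j\<in>{1..r}. i \<noteq> j \<longrightarrow> normA A i j \<in> {0, -1}) \<and>
     (\<forall>i\<in>{1..r}. \<forall>j\<in>{1..r}. i \<noteq> j \<longrightarrow> normA A i j + normA A j i = of_int (N j i)) \<and>
     (\<forall>i\<in>{1..r}. \<forall>j\<in>{1..r}. i \<noteq> j \<longrightarrow> normA A i j = -1 \<longrightarrow>
        (\<forall>k\<in>{1..r}. k \<noteq> j \<longrightarrow> normA A i k \<noteq> -1) \<and>
        (\<forall>k\<in>{1..r}. k \<noteq> i \<longrightarrow> normA A k j \<noteq> -1))"

text \<open>A commutative complex algebra is a commutative ring ''a together with a unital
  ring homomorphism emb from the complex numbers (the structure map); scalar
  multiplication is c . x = emb c * x.\<close>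
definition calg :: "(complex \<Rightarrow> 'a::comm_ring_1) \<Rightarrow> bool" where
  "calg emb \<longleftrightarrow> emb 1 = 1 \<and> (\<forall>x y. emb (x + y) = emb x + emb y) \<and>
                 (\<forall>x y. emb (x * y) = emb x * emb y)"

definition derivation :: "(complex \<Rightarrow> 'a::comm_ring_1) \<Rightarrow> ('a \<Rightarrow> 'a) \<Rightarrow> bool" where
  "derivation emb D \<longleftrightarrow>
     (\<forall>x y. D (x + y) = D x + D y) \<and>
     (\<forall>c x. D (emb c * x) = emb c * D x) \<and>
     (\<forall>x y. D (x * y) = x * D y + y * D x)"

definition lbr :: "('a \<Rightarrow> 'a) \<Rightarrow> ('a \<Rightarrow> 'a) \<Rightarrow> 'a \<Rightarrow> 'a::comm_ring_1" where
  "lbr D E = (\<lambda>x. D (E x) - E (D x))"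

definition amul :: "'a \<Rightarrow> ('a \<Rightarrow> 'a) \<Rightarrow> 'a \<Rightarrow> 'a::comm_ring_1" where
  "amul a D = (\<lambda>x. a * D x)"

definition ainv :: "'a::comm_ring_1 \<Rightarrow> 'a" where
  "ainv v = (SOME w. v * w = 1)"

text \<open>An element of h is a coefficient function c with support in {1..n}, n = r+s,
  standing for sum_a c a H_a.\<close>
definition hspace :: "nat \<Rightarrow> (nat \<Rightarrow> complex) set" where
  "hspace n = {c. \<forall>a. a \<notin> {1..n} \<longrightarrow> c a = 0}"

definition Hb :: "nat \<Rightarrow> nat \<Rightarrow> complex" where
  "Hb a = (\<lambda>b. if b = a then 1 else 0)"

definition lform :: "nat \<Rightarrow> (nat \<Rightarrow> complex) \<Rightarrow> (nat \<Rightarrow> complex) \<Rightarrow> complex" where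
  "lform n f c = (\<Sum>a=1..n. c a * f a)"

text \<open>Complex-linear map h -> Der(A) determined by the images FH a of the H_a.\<close>
definition linmap :: "(complex \<Rightarrow> 'a::comm_ring_1) \<Rightarrow> nat \<Rightarrow> (nat \<Rightarrow> 'a \<Rightarrow> 'a)
     \<Rightarrow> (nat \<Rightarrow> complex) \<Rightarrow> 'a \<Rightarrow> 'a" where
  "linmap emb n FH c = (\<lambda>x. \<Sum>a=1..n. emb (c a) * FH a x)"

text \<open>Linear form alpha induced on Im F via alpha(F(H)) = alpha(H).\<close>
definition induced_form :: "(complex \<Rightarrow> 'a::comm_ring_1) \<Rightarrow> nat \<Rightarrow> (nat \<Rightarrow> 'a \<Rightarrow> 'a)
     \<Rightarrow> (nat \<Rightarrow> complex) \<Rightarrow> ('a \<Rightarrow> 'a) \<Rightarrow> complex" where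
  "induced_form emb n FH f d =
     lform n f (SOME c. c \<in> hspace n \<and> linmap emb n FH c = d)"

end

theory Submission
  imports Defs "Jordan_Normal_Form.Determinant"
begin

(* Since ker F = Z, an element F(c) of Im F is determined by the root values alpha_i(c), and
   since the alpha_i are linearly independent these values can be prescribed arbitrarily; this
   gives existence and uniqueness of the delta_j.
   Each X_i, X_-i has the form u D with D in the commutative Lie algebra Im F and u a weight
   vector, F(H) u = lambda(H) u. For such elements [u D, w E] = u w (mu(D) E - lambda(E) D), so
   every relation reduces to an identity between root values, i.e. between entries of A and N.
   For i <> j this identity holds because an entry -1 of the normalised matrix A' is the only
   one in its row and column. For the Serre relations, ad(u D)^k (w E) = u^k w (p_k D + q_k E)
   with (p_k, q_k) given by a linear recursion, which for the entries 0, -1 allowed in A'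
   vanishes at k = 1 - n(i,j). *)

section \<open>Solving linear systems\<close>

lemma injective_square_system_solvable:
  fixes G :: "nat \<Rightarrow> nat \<Rightarrow> 'a::field"
  assumes inj: "\<And>y. \<forall>i\<in>{1..m}. (\<Sum>k=1..m. G i k * y k) = 0 \<Longrightarrow> \<forall>k\<in>{1..m}. y k = 0"
  shows "\<exists>y. \<forall>i\<in>{1..m}. (\<Sum>k=1..m. G i k * y k) = b i"
proof -
  define M where "M = mat m m (\<lambda>(i, k). G (Suc i) (Suc k))"
  have M: "M \<in> carrier_mat m m" by (simp add: M_def)
  have M_mult: "(M *\<^sub>v u) $ (i - 1) = (\<Sum>k=1..m. G i k * u $ (k - 1))"
    if "i \<in> {1..m}" "u \<in> carrier_vec m" for i u
    using that by (auto simp: M_def scalar_prod_def sum.atLeast1_atMost_eq atLeast0LessThan Suc_le_eq)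
  have "det M \<noteq> 0"
  proof
    assume "det M = 0"
    then obtain u where u: "u \<in> carrier_vec m" "u \<noteq> 0\<^sub>v m" "M *\<^sub>v u = 0\<^sub>v m"
      using det_0_iff_vec_prod_zero[OF M] by auto
    have "\<forall>i\<in>{1..m}. (\<Sum>k=1..m. G i k * u $ (k - 1)) = 0"
    proof
      fix i assume "i \<in> {1..m}"
      then show "(\<Sum>k=1..m. G i k * u $ (k - 1)) = 0"
        using M_mult[of i u] u by auto
    qed
    then have "\<forall>k\<in>{1..m}. u $ (k - 1) = 0" by (rule inj)
    then have "u = 0\<^sub>v m"
      using u(1) by (intro eq_vecI) (auto dest!: bspec[of _ _ "Suc i" for i])
    with u(2) show False ..
  qed
  then obtain B where B: "B \<in> carrier_mat m m" "M * B = 1\<^sub>m m"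
    using det_non_zero_imp_unit[OF M] unfolding Units_def ring_mat_def by auto
  define x where "x = B *\<^sub>v vec m (\<lambda>i. b (Suc i))"
  have x: "x \<in> carrier_vec m" using B by (simp add: x_def)
  have "M *\<^sub>v x = vec m (\<lambda>i. b (Suc i))"
    using B M by (simp add: x_def assoc_mult_mat_vec[symmetric])
  then have "\<forall>i\<in>{1..m}. (\<Sum>k=1..m. G i k * x $ (k - 1)) = b i"
    using M_mult[OF _ x, symmetric] by auto
  then show ?thesis by (intro exI[of _ "\<lambda>k. x $ (k - 1)"])
qed

lemma sum_cnj_mult_self_eq_0:
  fixes z :: "'b \<Rightarrow> complex"
  assumes "finite A" "(\<Sum>a\<in>A. cnj (z a) * z a) = 0" "a \<in> A"
  shows "z a = 0"
proof -
  have "cnj (z a) * z a \<ge> 0" for a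
    using conjugate_square_positive[of "z a"] by (simp only: conjugate_complex_def mult.commute)
  then show ?thesis
    using sum_nonneg_eq_0_iff[OF assms(1), of "\<lambda>a. cnj (z a) * z a"] assms(2,3) by simp
qed

text \<open>The Gram matrix of linearly independent complex rows is injective, hence invertible.\<close>
lemma independent_rows_system_solvable:
  fixes M :: "nat \<Rightarrow> nat \<Rightarrow> complex"
  assumes indep: "\<forall>c. (\<forall>a\<in>{1..n}. (\<Sum>i=1..m. c i * M i a) = 0) \<longrightarrow> (\<forall>i\<in>{1..m}. c i = 0)"
  shows "\<exists>x. (\<forall>a. a \<notin> {1..n} \<longrightarrow> x a = 0) \<and> (\<forall>i\<in>{1..m}. (\<Sum>a=1..n. x a * M i a) = b i)"
proof -
  define G where "G i k = (\<Sum>a=1..n. M i a * cnj (M k a))" for i k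
  define z where "z y a = (\<Sum>k=1..m. cnj (M k a) * y k)" for y a
  have G_z: "(\<Sum>k=1..m. G i k * y k) = (\<Sum>a=1..n. M i a * z y a)" for i y
    unfolding G_def z_def sum_distrib_left sum_distrib_right
    by (subst sum.swap) (simp add: mult.assoc)
  have cnj_z: "cnj (z y a) = (\<Sum>i=1..m. cnj (y i) * M i a)" for y a
    by (simp add: z_def mult.commute)
  have "\<forall>k\<in>{1..m}. y k = 0" if Gy: "\<forall>i\<in>{1..m}. (\<Sum>k=1..m. G i k * y k) = 0" for y
  proof -
    have "(\<Sum>a=1..n. cnj (z y a) * z y a) = (\<Sum>a=1..n. \<Sum>i=1..m. cnj (y i) * (M i a * z y a))"
      by (simp add: cnj_z sum_distrib_right mult.assoc)
    also have "\<dots> = (\<Sum>i=1..m. cnj (y i) * (\<Sum>k=1..m. G i k * y k))"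
      unfolding G_z sum_distrib_left by (rule sum.swap)
    also have "\<dots> = 0" using Gy by (intro sum.neutral) simp
    finally have "\<forall>a\<in>{1..n}. z y a = 0"
      using sum_cnj_mult_self_eq_0[of "{1..n}" "z y"] by blast
    then have "\<forall>a\<in>{1..n}. (\<Sum>i=1..m. cnj (y i) * M i a) = 0"
      by (metis cnj_z complex_cnj_zero)
    then show ?thesis using indep by (metis complex_cnj_zero_iff)
  qed
  then obtain y where y: "\<forall>i\<in>{1..m}. (\<Sum>k=1..m. G i k * y k) = b i"
    using injective_square_system_solvable by blast
  show ?thesis
  proof (intro exI conjI)
    show "\<forall>a. a \<notin> {1..n} \<longrightarrow> (if a \<in> {1..n} then z y a else 0) = 0" by simp
    show "\<forall>i\<in>{1..m}. (\<Sum>a=1..n. (if a \<in> {1..n} then z y a else 0) * M i a) = b i"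
      using y unfolding G_z by (simp add: mult.commute)
  qed
qed

lemma calg_simps:
  assumes "calg emb"
  shows "emb 0 = 0" "emb 1 = 1" "emb (x + y) = emb x + emb y" "emb (x * y) = emb x * emb y"
    and "emb (- x) = - emb x" "emb (x - y) = emb x - emb y"
proof -
  have add: "emb (x + y) = emb x + emb y" for x y
    using assms by (simp add: calg_def)
  show zero: "emb 0 = 0"
    using add[of 0 0] by simp
  have minus: "emb (- x) = - emb x" for x
    using add[of x "- x"] zero by (simp add: eq_neg_iff_add_eq_0 add.commute)
  show "emb (- x) = - emb x" by (rule minus)
  show "emb (x - y) = emb x - emb y"
    using add[of x "- y"] minus[of y] by simp
  show "emb 1 = 1" "emb (x + y) = emb x + emb y" "emb (x * y) = emb x * emb y"
    using assms by (simp_all add: calg_def)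
qed

lemma lform_lin: "lform m f (\<lambda>a. p * c a + q * d a) = p * lform m f c + q * lform m f d"
  unfolding lform_def by (simp add: sum.distrib sum_distrib_left algebra_simps)

lemma lform_add_form: "lform m (\<lambda>a. f a + g a) c = lform m f c + lform m g c"
  unfolding lform_def by (simp add: sum.distrib algebra_simps)

lemma lform_scale_form: "lform m (\<lambda>a. k * f a) c = k * lform m f c"
  unfolding lform_def by (simp add: sum_distrib_left mult_ac)

lemma lform_uminus_form: "lform m (\<lambda>a. - f a) c = - lform m f c"
  unfolding lform_def by (simp add: sum_negf)

lemma lform_Hb: "a \<in> {1..m} \<Longrightarrow> lform m f (Hb a) = f a"
  unfolding lform_def Hb_def by (simp add: if_distrib if_distribR cong: if_cong)

lemma hspace_lin: "c \<in> hspace m \<Longrightarrow> d \<in> hspace m \<Longrightarrow> (\<lambda>a. p * c a + q * d a) \<in> hspace m"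
  unfolding hspace_def by auto

lemma Hb_in_hspace: "a \<in> {1..m} \<Longrightarrow> Hb a \<in> hspace m"
  unfolding hspace_def Hb_def by auto

lemma gcm_A_sym: "gcm_A r i j = gcm_A r j i"
  by (simp add: gcm_A_def)

lemma gcm_Aff_sym: "gcm_Aff r i j = gcm_Aff r j i"
  by (auto simp: gcm_Aff_def)

lemma solution_matrix_diag_nonzero: "solution_matrix r N A \<Longrightarrow> i \<in> {1..r} \<Longrightarrow> A i i \<noteq> 0"
  by (simp add: solution_matrix_def)

lemma solution_matrix_offdiag:
  assumes "solution_matrix r N A" "i \<in> {1..r}" "j \<in> {1..r}" "i \<noteq> j"
  shows "normA A i j \<in> {0, -1}" "normA A i j + normA A j i = of_int (N j i)"
  using assms unfolding solution_matrix_def by blast+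

lemma normA_diag: "A i i \<noteq> 0 \<Longrightarrow> normA A i i = 1"
  by (simp add: normA_def)

text \<open>The uniqueness of the entry \<open>-1\<close> in its row and column forces, whenever
  \<open>A'\<^sub>j\<^sub>i = -1\<close>, the \<open>j\<close>-th row of \<open>N\<close> to be the difference of the columns \<open>j\<close> and \<open>i\<close> of \<open>A'\<close>.\<close>
lemma solution_matrix_column_difference:
  assumes sol: "solution_matrix r N A" and i: "i \<in> {1..r}" and j: "j \<in> {1..r}" and l: "l \<in> {1..r}"
    and ij: "i \<noteq> j" and N_jj: "N j j = 2" and ji: "normA A j i = -1"
  shows "of_int (N j l) = normA A l j - normA A l i"
proof -
  have ii: "normA A i i = 1" and jj: "normA A j j = 1"
    using sol i j by (simp_all add: normA_diag solution_matrix_diag_nonzero)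
  consider "l = j" | "l = i" | "l \<noteq> i" "l \<noteq> j" by blast
  then show ?thesis
  proof cases
    case 1
    then show ?thesis using N_jj jj ji by simp
  next
    case 2
    then show ?thesis using solution_matrix_offdiag(2)[OF sol i j ij] ii ji by simp
  next
    case 3
    have "normA A j l \<noteq> -1" "normA A l i \<noteq> -1"
      using sol i j l ij ji 3 unfolding solution_matrix_def by metis+
    then have "normA A j l = 0" "normA A l i = 0"
      using solution_matrix_offdiag(1)[OF sol j l] solution_matrix_offdiag(1)[OF sol l i] 3 by auto
    then show ?thesis using solution_matrix_offdiag(2)[OF sol l j] 3 by simp
  qed
qed

section \<open>Commuting derivations and weight vectors\<close>

text \<open>For weight vectors \<open>u\<close>, \<open>w\<close> of weights \<open>\<lambda>\<close>, \<open>\<mu>\<close>: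
  \<open>ad(u F c)\<^sup>k (w F d) = u\<^sup>k w F (p c + q d)\<close> with \<open>(p, q) = ad_coeffs (\<lambda> c) (\<lambda> d) (\<mu> c) k\<close>.\<close>
fun ad_coeffs :: "complex \<Rightarrow> complex \<Rightarrow> complex \<Rightarrow> nat \<Rightarrow> complex \<times> complex" where
  "ad_coeffs a b c 0 = (0, 1)"
| "ad_coeffs a b c (Suc k) =
     (case ad_coeffs a b c k of (p, q) \<Rightarrow>
        let \<beta> = of_nat k * a + c in (\<beta> * p - (p * a + q * b), \<beta> * q))"

lemma ad_coeffs_vanish:
  fixes x y :: complex
  assumes "x \<in> {0, -1}" "y \<in> {0, -1}" "of_int k = x + y"
  shows "ad_coeffs a (x * d) (y * a) (nat (1 - k)) = (0, 0)"
    and "ad_coeffs (1 / a) (y / d) (x / a) (nat (1 - k)) = (0, 0)"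
proof -
  define int_val where "int_val z = (if z = 0 then 0 else - 1 :: int)" for z :: complex
  have "x = of_int (int_val x)" "y = of_int (int_val y)"
    using assms(1,2) by (auto simp: int_val_def)
  then have "k = int_val x + int_val y"
    using assms(3) by (metis of_int_add of_int_eq_iff)
  then show "ad_coeffs a (x * d) (y * a) (nat (1 - k)) = (0, 0)"
    and "ad_coeffs (1 / a) (y / d) (x / a) (nat (1 - k)) = (0, 0)"
    using assms(1,2) by (auto simp: int_val_def numeral_eq_Suc Let_def algebra_simps)
qed

locale commuting_derivations =
  fixes emb :: "complex \<Rightarrow> 'a::comm_ring_1" and n :: nat and FH :: "nat \<Rightarrow> 'a \<Rightarrow> 'a"
  assumes calg: "calg emb"
    and derivation_FH: "\<forall>a\<in>{1..n}. derivation emb (FH a)"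
    and FH_commute: "\<forall>a\<in>{1..n}. \<forall>b\<in>{1..n}. lbr (FH a) (FH b) = (\<lambda>x. 0)"
begin

abbreviation F :: "(nat \<Rightarrow> complex) \<Rightarrow> 'a \<Rightarrow> 'a" where
  "F \<equiv> linmap emb n FH"

lemmas emb_simps = calg_simps[OF calg]

lemma FH_add: "a \<in> {1..n} \<Longrightarrow> FH a (x + y) = FH a x + FH a y"
  using derivation_FH unfolding derivation_def by blast

lemma FH_scale: "a \<in> {1..n} \<Longrightarrow> FH a (emb k * x) = emb k * FH a x"
  using derivation_FH unfolding derivation_def by blast

lemma FH_mult: "a \<in> {1..n} \<Longrightarrow> FH a (x * y) = x * FH a y + y * FH a x"
  using derivation_FH unfolding derivation_def by blast

lemma FH_FH_commute: "a \<in> {1..n} \<Longrightarrow> b \<in> {1..n} \<Longrightarrow> FH a (FH b x) = FH b (FH a x)"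
  using FH_commute by (metis lbr_def eq_iff_diff_eq_0)

lemma FH_sum: "a \<in> {1..n} \<Longrightarrow> FH a (\<Sum>b\<in>B. f b) = (\<Sum>b\<in>B. FH a (f b))"
proof (induction B rule: infinite_finite_induct)
  case (infinite B)
  then show ?case using FH_add[of a 0 0] by simp
next
  case empty
  then show ?case using FH_add[of a 0 0] by simp
next
  case (insert b B)
  then show ?case by (simp add: FH_add)
qed

lemma F_F_expand: "F c (F d x) = (\<Sum>a=1..n. \<Sum>b=1..n. emb (c a) * emb (d b) * FH a (FH b x))"
proof -
  have "F c (F d x) = (\<Sum>a=1..n. emb (c a) * (\<Sum>b=1..n. emb (d b) * FH a (FH b x)))"
    unfolding linmap_def by (intro sum.cong refl) (simp add: FH_sum FH_scale)
  then show ?thesis by (simp add: sum_distrib_left mult.assoc)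
qed

lemma F_commute: "F c (F d x) = F d (F c x)"
  unfolding F_F_expand by (subst sum.swap) (auto intro!: sum.cong simp: FH_FH_commute mult.commute)

lemma F_mult: "F c (x * y) = x * F c y + y * F c x"
  unfolding linmap_def by (simp add: FH_mult sum_distrib_left sum.distrib algebra_simps)

lemma F_one: "F c 1 = 0"
  using F_mult[of c 1 1] by simp

lemma F_lin: "F (\<lambda>a. p * c a + q * d a) x = emb p * F c x + emb q * F d x"
  unfolding linmap_def by (simp add: emb_simps sum_distrib_left sum.distrib algebra_simps)

lemma F_zero: "F (\<lambda>a. 0) = (\<lambda>x. 0)"
  unfolding linmap_def by (simp add: emb_simps)

lemma F_Hb: "a \<in> {1..n} \<Longrightarrow> F (Hb a) = FH a"
  unfolding linmap_def Hb_def by (simp add: emb_simps if_distrib if_distribR cong: if_cong)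

lemma lbr_amul_F: "lbr (amul u (F c)) (amul w (F d)) = (\<lambda>x. u * F c w * F d x - w * F d u * F c x)"
  unfolding lbr_def amul_def by (simp add: F_mult F_commute algebra_simps)

definition weight_vector :: "(nat \<Rightarrow> complex) \<Rightarrow> 'a \<Rightarrow> bool" where
  "weight_vector f u \<longleftrightarrow> (\<forall>c\<in>hspace n. F c u = emb (lform n f c) * u)"

lemma weight_vectorD: "weight_vector f u \<Longrightarrow> c \<in> hspace n \<Longrightarrow> F c u = emb (lform n f c) * u"
  by (simp add: weight_vector_def)

lemma weight_vector_mult:
  "weight_vector f u \<Longrightarrow> weight_vector g w \<Longrightarrow> weight_vector (\<lambda>a. f a + g a) (u * w)"
  by (simp add: weight_vector_def F_mult lform_add_form emb_simps algebra_simps)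

lemma weight_vector_power:
  assumes "weight_vector f u"
  shows "weight_vector (\<lambda>a. of_nat k * f a) (u ^ k)"
proof (induction k)
  case 0
  then show ?case by (simp add: weight_vector_def F_one lform_def emb_simps)
next
  case (Suc k)
  from weight_vector_mult[OF assms Suc] show ?case
    by (simp add: algebra_simps)
qed

lemma weight_vector_inverse:
  assumes u: "weight_vector f u" and uw: "u * w = 1"
  shows "weight_vector (\<lambda>a. - f a) w"
  unfolding weight_vector_def
proof
  fix c assume c: "c \<in> hspace n"
  have "0 = w * F c (u * w)" by (simp add: uw F_one)
  also have "\<dots> = (u * w) * F c w + (u * w) * (emb (lform n f c) * w)"
    by (simp add: F_mult weight_vectorD[OF u c] algebra_simps)
  finally show "F c w = emb (lform n (\<lambda>a. - f a) c) * w"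
    by (simp add: uw lform_uminus_form emb_simps eq_neg_iff_add_eq_0)
qed

lemma lbr_weight_vectors:
  assumes u: "weight_vector f u" and w: "weight_vector g w" and c: "c \<in> hspace n" and d: "d \<in> hspace n"
  shows "lbr (amul u (F c)) (amul w (F d))
       = amul (u * w) (F (\<lambda>a. lform n g c * d a + (- lform n f d) * c a))"
  unfolding lbr_amul_F weight_vectorD[OF u d] weight_vectorD[OF w c]
  unfolding amul_def F_lin by (simp add: emb_simps algebra_simps)

lemma lbr_F_weight_vector:
  assumes "weight_vector f u" "c \<in> hspace n"
  shows "lbr (F c) (amul u (F d)) = (\<lambda>x. emb (lform n f c) * amul u (F d) x)"
  unfolding lbr_def amul_def using assms
  by (simp add: F_mult F_commute weight_vectorD algebra_simps)

lemma ad_power_weight_vectors: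
  assumes u: "weight_vector f u" and w: "weight_vector g w" and c: "c \<in> hspace n" and d: "d \<in> hspace n"
  shows "(lbr (amul u (F c)) ^^ k) (amul w (F d))
       = (case ad_coeffs (lform n f c) (lform n f d) (lform n g c) k of
            (p, q) \<Rightarrow> amul (u ^ k * w) (F (\<lambda>a. p * c a + q * d a)))"
proof (induction k)
  case 0
  then show ?case by (simp add: amul_def F_lin emb_simps)
next
  case (Suc k)
  obtain p q where pq: "ad_coeffs (lform n f c) (lform n f d) (lform n g c) k = (p, q)"
    by fastforce
  have t: "(\<lambda>a. p * c a + q * d a) \<in> hspace n"
    using c d by (rule hspace_lin)
  have uw: "weight_vector (\<lambda>a. of_nat k * f a + g a) (u ^ k * w)"
    using weight_vector_mult[OF weight_vector_power[OF u] w] .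
  have "(lbr (amul u (F c)) ^^ Suc k) (amul w (F d))
      = lbr (amul u (F c)) (amul (u ^ k * w) (F (\<lambda>a. p * c a + q * d a)))"
    using Suc pq by simp
  also have "\<dots> = amul (u ^ Suc k * w)
      (F (\<lambda>a. lform n (\<lambda>a. of_nat k * f a + g a) c * (p * c a + q * d a)
                + (- lform n f (\<lambda>a. p * c a + q * d a)) * c a))"
    by (simp add: lbr_weight_vectors[OF u uw c t] mult.assoc)
  finally show ?case
    by (simp add: pq Let_def lform_lin lform_add_form lform_scale_form algebra_simps)
qed

end

section \<open>Realising the defining relations\<close>

locale root_realisation = commuting_derivations +
  fixes r :: nat and alpha :: "nat \<Rightarrow> nat \<Rightarrow> complex"
  assumes alpha_indep:
      "\<forall>c. (\<forall>a\<in>{1..n}. (\<Sum>i=1..r. c i * alpha i a) = 0) \<longrightarrow> (\<forall>i\<in>{1..r}. c i = 0)"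
    and F_ker: "\<forall>c\<in>hspace n. F c = (\<lambda>x. 0) \<longleftrightarrow> (\<forall>i\<in>{1..r}. lform n (alpha i) c = 0)"
begin

lemma F_eq_iff:
  assumes "c \<in> hspace n" "d \<in> hspace n"
  shows "F c = F d \<longleftrightarrow> (\<forall>i\<in>{1..r}. lform n (alpha i) c = lform n (alpha i) d)"
proof -
  let ?e = "\<lambda>a. 1 * c a + (- 1) * d a"
  have "?e \<in> hspace n" using assms by (rule hspace_lin)
  moreover have "F ?e = (\<lambda>x. 0) \<longleftrightarrow> F c = F d"
    unfolding fun_eq_iff F_lin by (simp add: emb_simps)
  moreover have "lform n (alpha i) ?e = 0 \<longleftrightarrow> lform n (alpha i) c = lform n (alpha i) d" for i
    unfolding lform_lin by simp
  ultimately show ?thesis using F_ker by auto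
qed

lemma induced_form_F:
  assumes "c \<in> hspace n" "i \<in> {1..r}"
  shows "induced_form emb n FH (alpha i) (F c) = lform n (alpha i) c"
proof -
  have "\<exists>c'. c' \<in> hspace n \<and> F c' = F c" using assms(1) by blast
  then have "(SOME c'. c' \<in> hspace n \<and> F c' = F c) \<in> hspace n \<and> F (SOME c'. c' \<in> hspace n \<and> F c' = F c) = F c"
    by (rule someI_ex)
  then show ?thesis
    unfolding induced_form_def using F_eq_iff assms by blast
qed

lemma ex_coeffs_root_values: "\<exists>c. c \<in> hspace n \<and> (\<forall>i\<in>{1..r}. lform n (alpha i) c = b i)"
  using independent_rows_system_solvable[OF alpha_indep] unfolding hspace_def lform_def by blast

end

locale cartan_realisation = root_realisation +
  fixes N :: "nat \<Rightarrow> nat \<Rightarrow> int" and A :: "nat \<Rightarrow> nat \<Rightarrow> complex" and v :: "nat \<Rightarrow> 'a"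
  assumes r_le_n: "r \<le> n"
    and N_sym: "\<And>i j. N i j = N j i"
    and N_diag: "\<And>i. N i i = 2"
    and sol: "solution_matrix r N A"
    and alpha_N: "\<forall>i\<in>{1..r}. \<forall>j\<in>{1..r}. alpha j i = of_int (N i j)"
    and v_inv: "\<forall>i\<in>{1..r}. \<exists>w. v i * w = 1"
    and F_v: "\<forall>c\<in>hspace n. \<forall>i\<in>{1..r}. F c (v i) = emb (lform n (alpha i) c) * v i"
begin

definition delta_coeffs :: "nat \<Rightarrow> nat \<Rightarrow> complex" where
  "delta_coeffs j = (SOME c. c \<in> hspace n \<and> (\<forall>i\<in>{1..r}. lform n (alpha i) c = A i j))"

definition delta :: "nat \<Rightarrow> 'a \<Rightarrow> 'a" where
  "delta j = F (delta_coeffs j)"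

definition delta_neg_coeffs :: "nat \<Rightarrow> nat \<Rightarrow> complex" where
  "delta_neg_coeffs i = (\<lambda>a. (- (1 / A i i)) * Hb i a + (1 / A i i * (1 / A i i)) * delta_coeffs i a)"

definition delta_neg :: "nat \<Rightarrow> 'a \<Rightarrow> 'a" where
  "delta_neg i = (\<lambda>x. emb (1 / A i i) * (- FH i x + emb (1 / A i i) * delta i x))"

definition X_pos :: "nat \<Rightarrow> 'a \<Rightarrow> 'a" where
  "X_pos i = amul (v i) (delta i)"

definition X_neg :: "nat \<Rightarrow> 'a \<Rightarrow> 'a" where
  "X_neg i = amul (ainv (v i)) (delta_neg i)"

lemma delta_coeffs_spec:
  "delta_coeffs j \<in> hspace n \<and> (\<forall>i\<in>{1..r}. lform n (alpha i) (delta_coeffs j) = A i j)"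
  unfolding delta_coeffs_def by (rule someI_ex[OF ex_coeffs_root_values])

lemma delta_coeffs_in_hspace: "delta_coeffs j \<in> hspace n"
  using delta_coeffs_spec by blast

lemma root_delta_coeffs: "i \<in> {1..r} \<Longrightarrow> lform n (alpha i) (delta_coeffs j) = A i j"
  using delta_coeffs_spec by blast

lemma delta_spec:
  "\<forall>j\<in>{1..r}. delta j \<in> F ` hspace n \<and> (\<forall>i\<in>{1..r}. induced_form emb n FH (alpha i) (delta j) = A i j)"
  unfolding delta_def by (simp add: delta_coeffs_in_hspace root_delta_coeffs induced_form_F)

lemma delta_unique:
  "\<forall>\<delta>'. (\<forall>j\<in>{1..r}. \<delta>' j \<in> F ` hspace n \<and> (\<forall>i\<in>{1..r}. induced_form emb n FH (alpha i) (\<delta>' j) = A i j))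
     \<longrightarrow> (\<forall>j\<in>{1..r}. \<delta>' j = delta j)"
proof (intro allI impI ballI)
  fix \<delta>' j
  assume \<delta>': "\<forall>j\<in>{1..r}. \<delta>' j \<in> F ` hspace n \<and> (\<forall>i\<in>{1..r}. induced_form emb n FH (alpha i) (\<delta>' j) = A i j)"
    and j: "j \<in> {1..r}"
  then obtain c where c: "c \<in> hspace n" "\<delta>' j = F c" by blast
  have "lform n (alpha i) c = lform n (alpha i) (delta_coeffs j)" if i: "i \<in> {1..r}" for i
  proof -
    have "induced_form emb n FH (alpha i) (\<delta>' j) = A i j" using \<delta>' j i by blast
    then show ?thesis using c(2) induced_form_F[OF c(1) i] root_delta_coeffs[OF i] by simp
  qed
  then show "\<delta>' j = delta j"
    by (simp add: delta_def c(2) F_eq_iff[OF c(1) delta_coeffs_in_hspace])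
qed

lemma A_diag_nonzero: "i \<in> {1..r} \<Longrightarrow> A i i \<noteq> 0"
  using sol by (rule solution_matrix_diag_nonzero)

lemma delta_neg_coeffs_in_hspace: "i \<in> {1..r} \<Longrightarrow> delta_neg_coeffs i \<in> hspace n"
  unfolding delta_neg_coeffs_def using r_le_n by (intro hspace_lin Hb_in_hspace delta_coeffs_in_hspace) auto

lemma delta_neg_F:
  assumes i: "i \<in> {1..r}"
  shows "delta_neg i = F (delta_neg_coeffs i)"
proof
  fix x
  have "F (delta_neg_coeffs i) x = emb (- (1 / A i i)) * FH i x + emb (1 / A i i * (1 / A i i)) * delta i x"
    unfolding delta_neg_coeffs_def F_lin delta_def using i r_le_n by (simp add: F_Hb)
  then show "delta_neg i x = F (delta_neg_coeffs i) x"
    unfolding delta_neg_def emb_simps by (simp add: algebra_simps)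
qed

lemma root_delta_neg_coeffs:
  assumes "i \<in> {1..r}" "l \<in> {1..r}"
  shows "lform n (alpha l) (delta_neg_coeffs i) = (normA A l i - of_int (N i l)) / A i i"
proof -
  have "lform n (alpha l) (Hb i) = of_int (N i l)"
    using assms r_le_n alpha_N by (simp add: lform_Hb)
  then show ?thesis
    unfolding delta_neg_coeffs_def lform_lin
    using assms A_diag_nonzero[of i] by (simp add: root_delta_coeffs normA_def field_simps)
qed

lemma v_ainv:
  assumes "i \<in> {1..r}"
  shows "v i * ainv (v i) = 1"
proof -
  have "\<exists>w. v i * w = 1" using v_inv assms by blast
  then show ?thesis unfolding ainv_def by (rule someI_ex)
qed

lemma weight_vector_v: "i \<in> {1..r} \<Longrightarrow> weight_vector (alpha i) (v i)"
  using F_v by (simp add: weight_vector_def)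

lemma weight_vector_ainv_v: "i \<in> {1..r} \<Longrightarrow> weight_vector (\<lambda>a. - alpha i a) (ainv (v i))"
  using weight_vector_inverse weight_vector_v v_ainv by blast

lemma lbr_X_pos_X_neg:
  assumes i: "i \<in> {1..r}" and j: "j \<in> {1..r}"
  shows "lbr (X_pos i) (X_neg j) = amul (v i * ainv (v j))
    (F (\<lambda>a. (- A j i) * delta_neg_coeffs j a + (- lform n (alpha i) (delta_neg_coeffs j)) * delta_coeffs i a))"
  unfolding X_pos_def X_neg_def delta_def delta_neg_F[OF j]
  using lbr_weight_vectors[OF weight_vector_v[OF i] weight_vector_ainv_v[OF j]
      delta_coeffs_in_hspace[of i] delta_neg_coeffs_in_hspace[OF j]]
  by (simp add: lform_uminus_form root_delta_coeffs[OF j])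

lemma lbr_X_pos_X_neg_same:
  assumes i: "i \<in> {1..r}"
  shows "lbr (X_pos i) (X_neg i) = FH i"
proof -
  let ?c = "\<lambda>a. (- A i i) * delta_neg_coeffs i a + (- lform n (alpha i) (delta_neg_coeffs i)) * delta_coeffs i a"
  have Hb: "Hb i \<in> hspace n" using i r_le_n by (simp add: Hb_in_hspace)
  have "lform n (alpha l) ?c = lform n (alpha l) (Hb i)" if l: "l \<in> {1..r}" for l
  proof -
    have "lform n (alpha l) ?c = (- A i i) * ((normA A l i - of_int (N i l)) / A i i)
        + (- ((normA A i i - of_int (N i i)) / A i i)) * A l i"
      unfolding lform_lin
      by (simp add: root_delta_neg_coeffs[OF i l] root_delta_neg_coeffs[OF i i] root_delta_coeffs[OF l])
    also have "\<dots> = of_int (N i l)"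
      using A_diag_nonzero[OF i] by (simp add: normA_diag N_diag) (simp add: normA_def field_simps)
    also have "\<dots> = lform n (alpha l) (Hb i)"
      using i l r_le_n alpha_N by (simp add: lform_Hb)
    finally show ?thesis .
  qed
  moreover have "?c \<in> hspace n"
    using i by (intro hspace_lin delta_neg_coeffs_in_hspace delta_coeffs_in_hspace)
  ultimately have "F ?c = F (Hb i)"
    using F_eq_iff[OF _ Hb] by blast
  then show ?thesis
    using i r_le_n by (simp add: lbr_X_pos_X_neg v_ainv F_Hb amul_def)
qed

lemma lbr_X_pos_X_neg_other:
  assumes i: "i \<in> {1..r}" and j: "j \<in> {1..r}" and ij: "i \<noteq> j"
  shows "lbr (X_pos i) (X_neg j) = (\<lambda>x. 0)"
proof -
  let ?c = "\<lambda>a. (- A j i) * delta_neg_coeffs j a + (- lform n (alpha i) (delta_neg_coeffs j)) * delta_coeffs i a"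
  let ?y = "normA A j i"
  have "lform n (alpha l) ?c = lform n (alpha l) (\<lambda>a. 0)" if l: "l \<in> {1..r}" for l
  proof -
    have Aji: "A j i = ?y * A i i" and Ali: "A l i = normA A l i * A i i"
      using A_diag_nonzero[OF i] by (simp_all add: normA_def)
    have Nji: "of_int (N j i) = normA A i j + ?y"
      using solution_matrix_offdiag(2)[OF sol i j ij] by simp
    have "lform n (alpha l) ?c = (- A j i) * ((normA A l j - of_int (N j l)) / A j j)
        + (- ((normA A i j - of_int (N j i)) / A j j)) * A l i"
      unfolding lform_lin
      by (simp add: root_delta_neg_coeffs[OF j l] root_delta_neg_coeffs[OF j i] root_delta_coeffs[OF l])
    also have "\<dots> = ?y * A i i / A j j * (of_int (N j l) - normA A l j + normA A l i)"
      unfolding Aji Ali Nji using A_diag_nonzero[OF j] by (simp add: field_simps)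
    also have "\<dots> = 0"
    proof (cases "?y = 0")
      case False
      then have "?y = -1" using solution_matrix_offdiag(1)[OF sol j i] ij by auto
      then show ?thesis
        using solution_matrix_column_difference[OF sol i j l ij N_diag] by simp
    qed simp
    finally show ?thesis by (simp add: lform_def)
  qed
  moreover have "?c \<in> hspace n"
    using i j by (intro hspace_lin delta_neg_coeffs_in_hspace delta_coeffs_in_hspace)
  moreover have "(\<lambda>a. 0) \<in> hspace n" by (simp add: hspace_def)
  ultimately have "F ?c = F (\<lambda>a. 0)"
    using F_eq_iff by blast
  then show ?thesis
    using i j by (simp add: lbr_X_pos_X_neg F_zero amul_def)
qed

lemma lbr_FH_X_pos:
  assumes a: "a \<in> {1..n}" and j: "j \<in> {1..r}"
  shows "lbr (FH a) (X_pos j) = (\<lambda>x. emb (alpha j a) * X_pos j x)"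
  using lbr_F_weight_vector[OF weight_vector_v[OF j] Hb_in_hspace[OF a], of "delta_coeffs j"]
  by (simp add: F_Hb[OF a] lform_Hb[OF a] X_pos_def delta_def)

lemma lbr_FH_X_neg:
  assumes a: "a \<in> {1..n}" and j: "j \<in> {1..r}"
  shows "lbr (FH a) (X_neg j) = (\<lambda>x. - (emb (alpha j a) * X_neg j x))"
  using lbr_F_weight_vector[OF weight_vector_ainv_v[OF j] Hb_in_hspace[OF a], of "delta_neg_coeffs j"]
  by (simp add: F_Hb[OF a] lform_Hb[OF a] X_neg_def delta_neg_F[OF j] emb_simps)

lemma normA_offdiag:
  assumes i: "i \<in> {1..r}" and j: "j \<in> {1..r}" and ij: "i \<noteq> j"
  shows "normA A i j \<in> {0, -1}" "normA A j i \<in> {0, -1}" "of_int (N i j) = normA A i j + normA A j i"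
  using solution_matrix_offdiag[OF sol i j ij] solution_matrix_offdiag[OF sol j i] ij N_sym[of i j] by auto

lemma serre_X_pos:
  assumes i: "i \<in> {1..r}" and j: "j \<in> {1..r}" and ij: "i \<noteq> j"
  shows "(lbr (X_pos i) ^^ nat (1 - N i j)) (X_pos j) = (\<lambda>x. 0)"
proof -
  have "A i j = normA A i j * A j j" "A j i = normA A j i * A i i"
    using A_diag_nonzero[OF i] A_diag_nonzero[OF j] by (simp_all add: normA_def)
  then have "ad_coeffs (A i i) (A i j) (A j i) (nat (1 - N i j)) = (0, 0)"
    using ad_coeffs_vanish(1)[OF normA_offdiag[OF i j ij]] by simp
  then show ?thesis
    using ad_power_weight_vectors[OF weight_vector_v[OF i] weight_vector_v[OF j]
        delta_coeffs_in_hspace[of i] delta_coeffs_in_hspace[of j], of "nat (1 - N i j)"]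
    by (simp add: X_pos_def delta_def root_delta_coeffs[OF i] root_delta_coeffs[OF j] F_zero amul_def)
qed

lemma serre_X_neg:
  assumes i: "i \<in> {1..r}" and j: "j \<in> {1..r}" and ij: "i \<noteq> j"
  shows "(lbr (X_neg i) ^^ nat (1 - N i j)) (X_neg j) = (\<lambda>x. 0)"
proof -
  note facts = normA_offdiag[OF i j ij]
  have "- lform n (alpha i) (delta_neg_coeffs i) = 1 / A i i"
    using A_diag_nonzero[OF i] by (simp add: root_delta_neg_coeffs[OF i i] normA_diag N_diag)
  moreover have "- lform n (alpha i) (delta_neg_coeffs j) = normA A j i / A j j"
    using facts(3) N_sym[of i j] by (simp add: root_delta_neg_coeffs[OF j i] field_simps)
  moreover have "- lform n (alpha j) (delta_neg_coeffs i) = normA A i j / A i i"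
    using facts(3) by (simp add: root_delta_neg_coeffs[OF i j] field_simps)
  ultimately have "ad_coeffs (- lform n (alpha i) (delta_neg_coeffs i)) (- lform n (alpha i) (delta_neg_coeffs j))
      (- lform n (alpha j) (delta_neg_coeffs i)) (nat (1 - N i j)) = (0, 0)"
    using ad_coeffs_vanish(2)[OF facts] by simp
  then show ?thesis
    using ad_power_weight_vectors[OF weight_vector_ainv_v[OF i] weight_vector_ainv_v[OF j]
        delta_neg_coeffs_in_hspace[OF i] delta_neg_coeffs_in_hspace[OF j], of "nat (1 - N i j)"]
    by (simp add: X_neg_def delta_neg_F[OF i] delta_neg_F[OF j] lform_uminus_form F_zero amul_def)
qed


lemma defining_relations:
  "(\<forall>i\<in>{1..r}. lbr (X_pos i) (X_neg i) = FH i) \<and>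
   (\<forall>i\<in>{1..r}. \<forall>j\<in>{1..r}. i \<noteq> j \<longrightarrow> lbr (X_pos i) (X_neg j) = (\<lambda>x. 0)) \<and>
   (\<forall>a\<in>{1..n}. \<forall>b\<in>{1..n}. lbr (FH a) (FH b) = (\<lambda>x. 0)) \<and>
   (\<forall>a\<in>{1..n}. \<forall>j\<in>{1..r}.
      lbr (FH a) (X_pos j) = (\<lambda>x. emb (alpha j a) * X_pos j x) \<and>
      lbr (FH a) (X_neg j) = (\<lambda>x. - (emb (alpha j a) * X_neg j x))) \<and>
   (\<forall>i\<in>{1..r}. \<forall>j\<in>{1..r}. i \<noteq> j \<longrightarrow>
      (lbr (X_pos i) ^^ nat (1 - N i j)) (X_pos j) = (\<lambda>x. 0) \<and>
      (lbr (X_neg i) ^^ nat (1 - N i j)) (X_neg j) = (\<lambda>x. 0))"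
  using lbr_X_pos_X_neg_same lbr_X_pos_X_neg_other FH_commute lbr_FH_X_pos lbr_FH_X_neg
    serre_X_pos serre_X_neg
  by blast

end

theorem theorem3p14:
  fixes r s :: nat
    and N :: "nat \<Rightarrow> nat \<Rightarrow> int"
    and A :: "nat \<Rightarrow> nat \<Rightarrow> complex"
    and emb :: "complex \<Rightarrow> 'a::comm_ring_1"
    and alpha :: "nat \<Rightarrow> nat \<Rightarrow> complex"
    and FH :: "nat \<Rightarrow> 'a \<Rightarrow> 'a"
    and v :: "nat \<Rightarrow> 'a"
  assumes type: "(N = gcm_A r \<and> r \<ge> 1 \<and> s = 0) \<or> (N = gcm_Aff r \<and> r \<ge> 2 \<and> s = 1)"
    and sol: "solution_matrix r N A"
    and alg: "calg emb"
    and alpha_N: "\<forall>i\<in>{1..r}. \<forall>j\<in>{1..r}. alpha j i = of_int (N i j)"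
    and alpha_indep: "\<forall>c. (\<forall>a\<in>{1..r+s}. (\<Sum>i=1..r. c i * alpha i a) = 0) \<longrightarrow> (\<forall>i\<in>{1..r}. c i = 0)"
    and F_der: "\<forall>a\<in>{1..r+s}. derivation emb (FH a)"
    and F_hom: "\<forall>a\<in>{1..r+s}. \<forall>b\<in>{1..r+s}. lbr (FH a) (FH b) = (\<lambda>x. 0)"
    and F_ker: "\<forall>c\<in>hspace (r+s). linmap emb (r+s) FH c = (\<lambda>x. 0) \<longleftrightarrow>
                   (\<forall>i\<in>{1..r}. lform (r+s) (alpha i) c = 0)"
    and v_inv: "\<forall>i\<in>{1..r}. \<exists>w. v i * w = 1"
    and F_v: "\<forall>c\<in>hspace (r+s). \<forall>i\<in>{1..r}.
                linmap emb (r+s) FH c (v i) = emb (lform (r+s) (alpha i) c) * v i"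
  shows "\<exists>\<delta> :: nat \<Rightarrow> 'a \<Rightarrow> 'a.
     (\<forall>j\<in>{1..r}. \<delta> j \<in> linmap emb (r+s) FH ` hspace (r+s) \<and>
        (\<forall>i\<in>{1..r}. induced_form emb (r+s) FH (alpha i) (\<delta> j) = A i j)) \<and>
     (\<forall>\<delta>' :: nat \<Rightarrow> 'a \<Rightarrow> 'a.
        (\<forall>j\<in>{1..r}. \<delta>' j \<in> linmap emb (r+s) FH ` hspace (r+s) \<and>
          (\<forall>i\<in>{1..r}. induced_form emb (r+s) FH (alpha i) (\<delta>' j) = A i j))
        \<longrightarrow> (\<forall>j\<in>{1..r}. \<delta>' j = \<delta> j)) \<and>
     (let \<delta>m = (\<lambda>i x. emb (1 / A i i) * (- FH i x + emb (1 / A i i) * \<delta> i x));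
          X = (\<lambda>i. amul (v i) (\<delta> i));
          Y = (\<lambda>i. amul (ainv (v i)) (\<delta>m i))
      in (\<forall>i\<in>{1..r}. lbr (X i) (Y i) = FH i) \<and>
         (\<forall>i\<in>{1..r}. \<forall>j\<in>{1..r}. i \<noteq> j \<longrightarrow> lbr (X i) (Y j) = (\<lambda>x. 0)) \<and>
         (\<forall>a\<in>{1..r+s}. \<forall>b\<in>{1..r+s}. lbr (FH a) (FH b) = (\<lambda>x. 0)) \<and>
         (\<forall>a\<in>{1..r+s}. \<forall>j\<in>{1..r}.
            lbr (FH a) (X j) = (\<lambda>x. emb (alpha j a) * X j x) \<and>
            lbr (FH a) (Y j) = (\<lambda>x. - (emb (alpha j a) * Y j x))) \<and>
         (\<forall>i\<in>{1..r}. \<forall>j\<in>{1..r}. i \<noteq> j \<longrightarrow>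
            (lbr (X i) ^^ nat (1 - N i j)) (X j) = (\<lambda>x. 0) \<and>
            (lbr (Y i) ^^ nat (1 - N i j)) (Y j) = (\<lambda>x. 0)))"
proof -
  interpret cartan_realisation emb "r + s" FH r alpha N A v
    using type sol alg alpha_N alpha_indep F_der F_hom F_ker v_inv F_v gcm_A_sym gcm_Aff_sym
    by unfold_locales (auto simp: gcm_A_def gcm_Aff_def)
  show ?thesis
    unfolding Let_def
    by (rule exI[of _ delta], rule conjI[OF delta_spec conjI[OF delta_unique
          defining_relations[unfolded X_pos_def X_neg_def delta_neg_def]]])
qed

end
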